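(* Let $P,Q$ be finite posets and $R$ an indecomposable commutative unital ring. If $I^3(P,R)$ and $I^3(Q,R)$ are isomorphic as $R$-algebras (via an $R$-linear multiplicative bijection), then $P$ and $Q$ are isomorphic posets.
   Context: A commutative ring $R$ is indecomposable if its only idempotents are $0$ and $1$. For a finite poset $P$, let $P^3_\le=\{(x,y,z)\in P^3: x\le y\le z\}$. The third partial flag incidence algebra $I^3(P,R)$ is the $R$-module of all functions $f:P^3_\le\to R$ (pointwise operations) with the (non-associative) multiplication $(fg)(x_1,x_2,x_3)=\sum f(x_1,y_1,y_2)\,g(y_1,y_2,x_3)$, the sum over all $y_1,y_2$ with $x_1\le y_1\le x_2\le y_2\le x_3$. *)

theory Defs
  imports Main
begin

text \<open>Elements are functions P^3 \<rightarrow> R that vanish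
  outside P^3_\<le> = {(x,y,z). x \<le> y \<le> z}, so this set is in bijection with all
  functions P^3_\<le> \<rightarrow> R.\<close>

definition I3 :: "('a::order \<times> 'a \<times> 'a \<Rightarrow> 'r::comm_ring_1) set" where
  "I3 = {f. \<forall>x y z. \<not> (x \<le> y \<and> y \<le> z) \<longrightarrow> f (x, y, z) = 0}"

definition I3_mult :: "('a::{order,finite} \<times> 'a \<times> 'a \<Rightarrow> 'r::comm_ring_1)
    \<Rightarrow> ('a \<times> 'a \<times> 'a \<Rightarrow> 'r) \<Rightarrow> ('a \<times> 'a \<times> 'a \<Rightarrow> 'r)" where
  "I3_mult f g = (\<lambda>(x1, x2, x3).
     if x1 \<le> x2 \<and> x2 \<le> x3 then
       (\<Sum>(y1, y2) \<in> {(y1, y2). x1 \<le> y1 \<and> y1 \<le> x2 \<and> x2 \<le> y2 \<and> y2 \<le> x3}.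
          f (x1, y1, y2) * g (y1, y2, x3))
     else 0)"

definition indecomposable :: "'r::comm_ring_1 itself \<Rightarrow> bool" where
  "indecomposable _ \<longleftrightarrow> (\<forall>e::'r. e * e = e \<longrightarrow> e = 0 \<or> e = 1)"

definition I3_algebra_iso ::
  "(('a::{order,finite} \<times> 'a \<times> 'a \<Rightarrow> 'r::comm_ring_1) \<Rightarrow> ('b::{order,finite} \<times> 'b \<times> 'b \<Rightarrow> 'r))
   \<Rightarrow> bool" where
  "I3_algebra_iso \<phi> \<longleftrightarrow>
     bij_betw \<phi> I3 I3 \<and>
     (\<forall>f\<in>I3. \<forall>g\<in>I3. \<phi> (\<lambda>t. f t + g t) = (\<lambda>t. \<phi> f t + \<phi> g t)) \<and>
     (\<forall>c. \<forall>f\<in>I3. \<phi> (\<lambda>t. c * f t) = (\<lambda>t. c * \<phi> f t)) \<and>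
     (\<forall>f\<in>I3. \<forall>g\<in>I3. \<phi> (I3_mult f g) = I3_mult (\<phi> f) (\<phi> g))"

definition poset_iso :: "('a::order \<Rightarrow> 'b::order) \<Rightarrow> bool" where
  "poset_iso h \<longleftrightarrow> bij h \<and> (\<forall>x y. x \<le> y \<longleftrightarrow> h x \<le> h y)"

end

theory Submission
  imports Defs
begin

(* The diagonal units e_x = I3_basis x x x are pairwise orthogonal idempotents that are moreover
   left absorbing, e_x (e_x g) = e_x g; bijectivity and multiplicativity alone transport these
   properties.  A nonzero left absorbing
   idempotent e cannot vanish on the diagonal: at a point (x, m, z) of its support with [x, z]
   minimal, idempotency gives e (x, m, z) = e (x, x, z) e (x, z, z), while absorbing e e_z makes
   this product vanish unless x = z.  As R is indecomposable, the image of e_x therefore has a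
   diagonal entry 1 at some h x.  Orthogonality makes h injective, and pulling back a product
   that is nonzero at (h x, h x, h y) to a sandwich (e_x g) (k e_y), which vanishes unless
   x <= y, shows that h reflects the order.  The inverse isomorphism gives such a map in the
   other direction, and between finite posets this forces h to be an isomorphism, by counting
   comparable pairs. *)

definition I3_basis :: "'a \<Rightarrow> 'a \<Rightarrow> 'a \<Rightarrow> ('a \<times> 'a \<times> 'a \<Rightarrow> 'r::comm_ring_1)" where
  "I3_basis a b c = (\<lambda>t. if t = (a, b, c) then 1 else 0)"

lemma I3_basis_apply [simp]:
  "I3_basis a b c (x, y, z) = (if x = a \<and> y = b \<and> z = c then 1 else 0)"
  by (auto simp: I3_basis_def)

lemma I3_basis_in_I3: "a \<le> b \<Longrightarrow> b \<le> c \<Longrightarrow> I3_basis a b c \<in> I3"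
  by (auto simp: I3_def)

lemma I3_basis_diag_in_I3: "I3_basis x x x \<in> I3"
  by (simp add: I3_basis_in_I3)

lemma zero_in_I3: "(\<lambda>_. 0) \<in> I3"
  by (simp add: I3_def)

lemma I3_eq_zero: "f \<in> I3 \<Longrightarrow> \<not> (x \<le> y \<and> y \<le> z) \<Longrightarrow> f (x, y, z) = 0"
  by (simp add: I3_def)

lemma I3_mult_apply:
  "I3_mult f g (x1, x2, x3) =
    (if x1 \<le> x2 \<and> x2 \<le> x3 then
      (\<Sum>(y1, y2) \<in> {(y1, y2). x1 \<le> y1 \<and> y1 \<le> x2 \<and> x2 \<le> y2 \<and> y2 \<le> x3}.
         f (x1, y1, y2) * g (y1, y2, x3))
     else 0)"
  by (simp add: I3_mult_def fun_eq_iff split_paired_All)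

lemma I3_mult_in_I3: "I3_mult f g \<in> I3"
  by (simp add: I3_def I3_mult_apply)

lemma I3_mult_zero_left: "I3_mult (\<lambda>_. 0) g = (\<lambda>_. 0)"
  and I3_mult_zero_right: "I3_mult f (\<lambda>_. 0) = (\<lambda>_. 0)"
  by (simp_all add: I3_mult_def fun_eq_iff split_paired_All)

lemma I3_mult_apply_single:
  assumes "\<And>y1 y2. x1 \<le> y1 \<Longrightarrow> y1 \<le> x2 \<Longrightarrow> x2 \<le> y2 \<Longrightarrow> y2 \<le> x3 \<Longrightarrow> (y1, y2) \<noteq> (u, v)
      \<Longrightarrow> f (x1, y1, y2) * g (y1, y2, x3) = 0"
  shows "I3_mult f g (x1, x2, x3) =
    (if x1 \<le> u \<and> u \<le> x2 \<and> x2 \<le> v \<and> v \<le> x3 then f (x1, u, v) * g (u, v, x3) else 0)"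
proof -
  define S where "S = {(y1, y2). x1 \<le> y1 \<and> y1 \<le> x2 \<and> x2 \<le> y2 \<and> y2 \<le> x3}"
  have "(\<Sum>(y1, y2) \<in> S. f (x1, y1, y2) * g (y1, y2, x3)) =
      (\<Sum>(y1, y2) \<in> S \<inter> {(u, v)}. f (x1, y1, y2) * g (y1, y2, x3))"
    using assms by (intro sum.mono_neutral_right) (auto simp: S_def)
  then show ?thesis
    by (auto simp: I3_mult_apply S_def Int_insert_right intro: order_trans)
qed

lemma I3_mult_apply_diag: "I3_mult f g (q, q, q) = f (q, q, q) * g (q, q, q)"
  by (subst I3_mult_apply_single[where u = q and v = q]) (auto intro: order_antisym)

lemma I3_mult_basis_left:
  assumes "f \<in> I3" "a \<le> b"
  shows "I3_mult (I3_basis a b b) f (x, m, z) = (if x = a \<and> m = b then f (b, b, z) else 0)"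
  using assms
  by (subst I3_mult_apply_single[where u = b and v = b])
     (auto simp: I3_eq_zero intro: order_antisym)

lemma I3_mult_basis_right:
  assumes "f \<in> I3" "b \<le> c"
  shows "I3_mult f (I3_basis b b c) (x, m, z) = (if m = b \<and> z = c then f (x, b, b) else 0)"
  using assms
  by (subst I3_mult_apply_single[where u = b and v = b])
     (auto simp: I3_eq_zero intro: order_antisym)

lemma I3_basis_diag_idem: "I3_mult (I3_basis x x x) (I3_basis x x x) = I3_basis x x x"
  by (auto simp: fun_eq_iff split_paired_All I3_mult_basis_left I3_basis_in_I3)

lemma I3_basis_diag_orth: "x \<noteq> y \<Longrightarrow> I3_mult (I3_basis x x x) (I3_basis y y y) = (\<lambda>_. 0)"
  by (auto simp: fun_eq_iff split_paired_All I3_mult_basis_left I3_basis_in_I3)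

lemma I3_basis_diag_absorb:
  "g \<in> I3 \<Longrightarrow> I3_mult (I3_basis x x x) (I3_mult (I3_basis x x x) g) = I3_mult (I3_basis x x x) g"
  by (auto simp: fun_eq_iff split_paired_All I3_mult_basis_left I3_mult_in_I3)

lemma I3_mult_through_basis_apply:
  assumes "f \<in> I3" "f' \<in> I3" "p \<le> q"
  shows "I3_mult (I3_mult f (I3_basis p p q)) (I3_mult (I3_basis p q q) f') (p, p, q) =
    f (p, p, p) * f' (q, q, q)"
  using assms
  by (subst I3_mult_apply_single[where u = p and v = q])
     (auto simp: I3_mult_basis_left I3_mult_basis_right)

lemma I3_diag_sandwich_nonzero_imp_le:
  assumes "g \<in> I3" "k \<in> I3"
    and "I3_mult (I3_mult (I3_basis x x x) g) (I3_mult k (I3_basis y y y)) \<noteq> (\<lambda>_. 0)"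
  shows "x \<le> y"
proof -
  obtain a m c where
    "I3_mult (I3_mult (I3_basis x x x) g) (I3_mult k (I3_basis y y y)) (a, m, c) \<noteq> 0"
    using assms(3) by (auto simp: fun_eq_iff)
  moreover have "I3_mult (I3_mult (I3_basis x x x) g) (I3_mult k (I3_basis y y y)) (a, m, c) =
      (if a \<le> x \<and> x \<le> m \<and> m \<le> y \<and> y \<le> c
       then I3_mult (I3_basis x x x) g (a, x, y) * I3_mult k (I3_basis y y y) (x, y, c) else 0)"
    using assms(1,2)
    by (intro I3_mult_apply_single) (auto simp: I3_mult_basis_left I3_mult_basis_right)
  ultimately show ?thesis
    by (auto split: if_splits intro: order_trans)
qed

lemma I3_exists_minimal_support:
  fixes f :: "'a::{order,finite} \<times> 'a \<times> 'a \<Rightarrow> 'r::comm_ring_1"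
  assumes "f \<in> I3" "f \<noteq> (\<lambda>_. 0)"
  obtains x m z where "f (x, m, z) \<noteq> 0"
    and "\<And>x' m' z'. x \<le> x' \<Longrightarrow> z' \<le> z \<Longrightarrow> f (x', m', z') \<noteq> 0 \<Longrightarrow> x' = x \<and> z' = z"
proof -
  define A where "A = {{x..z} | x m z. f (x, m, z) \<noteq> 0}"
  obtain x0 m0 z0 where "f (x0, m0, z0) \<noteq> 0"
    using assms(2) by (auto simp: fun_eq_iff)
  then have "{x0..z0} \<in> A"
    by (auto simp: A_def)
  then obtain M where "M \<in> A" and M_minimal: "\<And>B. B \<in> A \<Longrightarrow> B \<subseteq> M \<Longrightarrow> M = B"
    using finite_has_minimal2[OF finite[of A]] by meson
  then obtain x m z where nz: "f (x, m, z) \<noteq> 0" and M: "M = {x..z}"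
    by (auto simp: A_def)
  show thesis
  proof (rule that[OF nz])
    fix x' m' z' assume "x \<le> x'" "z' \<le> z" and nz': "f (x', m', z') \<noteq> 0"
    have "x \<le> z" "x' \<le> z'"
      using I3_eq_zero[OF assms(1)] nz nz' order_trans by metis+
    have "{x'..z'} \<in> A"
      using nz' by (auto simp: A_def)
    moreover have "{x'..z'} \<subseteq> M"
      using \<open>x \<le> x'\<close> \<open>z' \<le> z\<close> by (simp add: M)
    ultimately have "{x..z} = {x'..z'}"
      using M_minimal M by blast
    then show "x' = x \<and> z' = z"
      using \<open>x \<le> z\<close> by simp
  qed
qed

lemma I3_idem_minimal_support_apply:
  assumes "I3_mult e e = e" "x \<le> m" "m \<le> z"
    and minimal: "\<And>x' m' z'. x \<le> x' \<Longrightarrow> z' \<le> z \<Longrightarrow> e (x', m', z') \<noteq> 0 \<Longrightarrow> x' = x \<and> z' = z"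
  shows "e (x, m, z) = e (x, x, z) * e (x, z, z)"
proof -
  have "I3_mult e e (x, m, z) = e (x, x, z) * e (x, z, z)"
  proof (subst I3_mult_apply_single[where u = x and v = z])
    fix y1 y2
    assume "x \<le> y1" "y1 \<le> m" "m \<le> y2" "y2 \<le> z" "(y1, y2) \<noteq> (x, z)"
    show "e (x, y1, y2) * e (y1, y2, z) = 0"
    proof (cases "y2 = z")
      case True
      with \<open>(y1, y2) \<noteq> (x, z)\<close> have "e (y1, z, z) = 0"
        using minimal[of y1 z z] \<open>x \<le> y1\<close> by blast
      with True show ?thesis by simp
    next
      case False
      then have "e (x, y1, y2) = 0"
        using minimal[of x y2 y1] \<open>y2 \<le> z\<close> by blast
      then show ?thesis by simp
    qed
  qed (use assms in auto)
  then show ?thesis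
    using assms(1) by simp
qed

lemma I3_left_absorbing_corner_eq_zero:
  assumes "e \<in> I3" "x \<noteq> z"
    and "I3_mult e (I3_mult e (I3_basis z z z)) = I3_mult e (I3_basis z z z)"
  shows "e (x, x, z) * e (x, z, z) = 0"
proof -
  let ?G = "I3_mult e (I3_basis z z z)"
  have "I3_mult e ?G (x, x, z) = (if x \<le> z then e (x, x, z) * ?G (x, z, z) else 0)"
    using assms(1) by (subst I3_mult_apply_single[where u = x and v = z])
      (auto simp: I3_mult_basis_right intro: order_antisym)
  also have "\<dots> = e (x, x, z) * e (x, z, z)"
    using assms(1) by (auto simp: I3_mult_basis_right I3_eq_zero)
  finally show ?thesis
    using assms by (simp add: I3_mult_basis_right)
qed

lemma I3_absorbing_idem_diag_nonzero:
  fixes e :: "'a::{order,finite} \<times> 'a \<times> 'a \<Rightarrow> 'r::comm_ring_1"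
  assumes "e \<in> I3" "I3_mult e e = e" "e \<noteq> (\<lambda>_. 0)"
    and absorb: "\<And>g. g \<in> I3 \<Longrightarrow> I3_mult e (I3_mult e g) = I3_mult e g"
  shows "\<exists>q. e (q, q, q) \<noteq> 0"
proof -
  obtain x m z where nz: "e (x, m, z) \<noteq> 0"
    and minimal: "\<And>x' m' z'. x \<le> x' \<Longrightarrow> z' \<le> z \<Longrightarrow> e (x', m', z') \<noteq> 0 \<Longrightarrow> x' = x \<and> z' = z"
    using I3_exists_minimal_support[OF assms(1,3)] by blast
  have "x \<le> m" "m \<le> z"
    using nz I3_eq_zero[OF assms(1)] by blast+
  show ?thesis
  proof (cases "x = z")
    case True
    then show ?thesis
      using nz \<open>x \<le> m\<close> \<open>m \<le> z\<close> order_antisym by blast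
  next
    case False
    have "e (x, m, z) = e (x, x, z) * e (x, z, z)"
      using assms(2) \<open>x \<le> m\<close> \<open>m \<le> z\<close> minimal by (rule I3_idem_minimal_support_apply)
    also have "\<dots> = 0"
      by (rule I3_left_absorbing_corner_eq_zero[OF assms(1) False absorb[OF I3_basis_diag_in_I3]])
    finally show ?thesis
      using nz by contradiction
  qed
qed

locale I3_mult_iso =
  fixes \<Phi> :: "('a::{order,finite} \<times> 'a \<times> 'a \<Rightarrow> 'r::comm_ring_1) \<Rightarrow> ('b::{order,finite} \<times> 'b \<times> 'b \<Rightarrow> 'r)"
  assumes bij: "bij_betw \<Phi> I3 I3"
    and mult: "\<And>f g. f \<in> I3 \<Longrightarrow> g \<in> I3 \<Longrightarrow> \<Phi> (I3_mult f g) = I3_mult (\<Phi> f) (\<Phi> g)"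
begin

lemma in_I3: "f \<in> I3 \<Longrightarrow> \<Phi> f \<in> I3"
  using bij by (auto simp: bij_betw_def)

lemma preimageE:
  assumes "g \<in> I3"
  obtains f where "f \<in> I3" "g = \<Phi> f"
  using bij assms by (auto simp: bij_betw_def)

lemma map_zero: "\<Phi> (\<lambda>_. 0) = (\<lambda>_. 0)"
proof -
  obtain f where "f \<in> I3" "\<Phi> f = (\<lambda>_. 0)"
    using preimageE[OF zero_in_I3] by metis
  then have "\<Phi> (I3_mult (\<lambda>_. 0) f) = I3_mult (\<Phi> (\<lambda>_. 0)) (\<lambda>_. 0)"
    using mult zero_in_I3 by metis
  then show ?thesis
    by (simp add: I3_mult_zero_left I3_mult_zero_right)
qed

lemma inv_into_mult_iso: "I3_mult_iso (inv_into I3 \<Phi>)"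
proof
  show "bij_betw (inv_into I3 \<Phi>) I3 I3"
    using bij by (rule bij_betw_inv_into)
  fix f g :: "'b \<times> 'b \<times> 'b \<Rightarrow> 'r"
  assume "f \<in> I3" "g \<in> I3"
  then have "\<Phi> (I3_mult (inv_into I3 \<Phi> f) (inv_into I3 \<Phi> g)) = I3_mult f g"
    using bij by (simp add: mult bij_betw_def inv_into_into f_inv_into_f)
  then show "inv_into I3 \<Phi> (I3_mult f g) = I3_mult (inv_into I3 \<Phi> f) (inv_into I3 \<Phi> g)"
    using bij \<open>f \<in> I3\<close> \<open>g \<in> I3\<close>
    by (metis I3_mult_in_I3 bij_betw_def bij_betw_inv_into_left inv_into_into)
qed

lemma diag_image_idem:
  "I3_mult (\<Phi> (I3_basis x x x)) (\<Phi> (I3_basis x x x)) = \<Phi> (I3_basis x x x)"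
  using mult[OF I3_basis_diag_in_I3 I3_basis_diag_in_I3, symmetric] by (simp add: I3_basis_diag_idem)

lemma diag_image_orth:
  "x \<noteq> y \<Longrightarrow> I3_mult (\<Phi> (I3_basis x x x)) (\<Phi> (I3_basis y y y)) = (\<lambda>_. 0)"
  using mult[OF I3_basis_diag_in_I3 I3_basis_diag_in_I3, symmetric] by (simp add: I3_basis_diag_orth map_zero)

lemma diag_image_absorb:
  assumes "g \<in> I3"
  shows "I3_mult (\<Phi> (I3_basis x x x)) (I3_mult (\<Phi> (I3_basis x x x)) g) = I3_mult (\<Phi> (I3_basis x x x)) g"
proof -
  obtain f where f: "f \<in> I3" "g = \<Phi> f"
    using preimageE[OF assms] .
  have "I3_mult (\<Phi> (I3_basis x x x)) (I3_mult (\<Phi> (I3_basis x x x)) (\<Phi> f)) =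
      \<Phi> (I3_mult (I3_basis x x x) (I3_mult (I3_basis x x x) f))"
    using f(1) by (simp add: mult I3_basis_diag_in_I3 I3_mult_in_I3)
  also have "\<dots> = I3_mult (\<Phi> (I3_basis x x x)) (\<Phi> f)"
    using f(1) by (simp add: mult I3_basis_diag_in_I3 I3_basis_diag_absorb)
  finally show ?thesis
    using f(2) by simp
qed

lemma diag_image_nonzero: "\<Phi> (I3_basis x x x) \<noteq> (\<lambda>_. 0)"
proof
  assume "\<Phi> (I3_basis x x x) = (\<lambda>_. 0)"
  then have "\<Phi> (I3_basis x x x) = \<Phi> (\<lambda>_. 0)"
    by (simp add: map_zero)
  then have "I3_basis x x x = (\<lambda>_. 0 :: 'r)"
    using inj_on_eq_iff[OF bij_betw_imp_inj_on[OF bij] I3_basis_diag_in_I3 zero_in_I3] by simp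
  from fun_cong[OF this, of "(x, x, x)"] show False
    by simp
qed

lemma diag_image_diag_one:
  assumes "indecomposable TYPE('r)"
  obtains q where "\<Phi> (I3_basis x x x) (q, q, q) = 1"
proof -
  let ?e = "\<Phi> (I3_basis x x x)"
  obtain q where "?e (q, q, q) \<noteq> 0"
    using I3_absorbing_idem_diag_nonzero[OF in_I3[OF I3_basis_diag_in_I3] diag_image_idem
        diag_image_nonzero diag_image_absorb] by blast
  moreover have "?e (q, q, q) * ?e (q, q, q) = ?e (q, q, q)"
    using I3_mult_apply_diag[of ?e ?e q] by (simp add: diag_image_idem)
  ultimately show thesis
    using assms that by (auto simp: indecomposable_def)
qed

lemma diag_image_diag_one_unique:
  assumes "\<Phi> (I3_basis x x x) (p, p, p) = 1" "\<Phi> (I3_basis y y y) (p, p, p) = 1"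
  shows "x = y"
proof (rule ccontr)
  assume "x \<noteq> y"
  have "I3_mult (\<Phi> (I3_basis x x x)) (\<Phi> (I3_basis y y y)) (p, p, p) = 1"
    using assms by (simp add: I3_mult_apply_diag)
  with diag_image_orth[OF \<open>x \<noteq> y\<close>] show False
    by simp
qed

lemma diag_image_diag_one_reflects_le:
  assumes "\<Phi> (I3_basis x x x) (p, p, p) = 1" "\<Phi> (I3_basis y y y) (q, q, q) = 1" "p \<le> q"
  shows "x \<le> y"
proof -
  obtain g where g: "g \<in> I3" "I3_basis p p q = \<Phi> g"
    using preimageE[OF I3_basis_in_I3[OF order_refl \<open>p \<le> q\<close>]] .
  obtain k where k: "k \<in> I3" "I3_basis p q q = \<Phi> k"
    using preimageE[OF I3_basis_in_I3[OF \<open>p \<le> q\<close> order_refl]] .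
  let ?sandwich = "I3_mult (I3_mult (I3_basis x x x) g) (I3_mult k (I3_basis y y y))"
  have "\<Phi> ?sandwich = I3_mult (I3_mult (\<Phi> (I3_basis x x x)) (I3_basis p p q))
      (I3_mult (I3_basis p q q) (\<Phi> (I3_basis y y y)))"
    using g k by (simp add: mult I3_mult_in_I3 I3_basis_in_I3)
  then have "\<Phi> ?sandwich (p, p, q) = 1"
    using assms by (simp add: I3_mult_through_basis_apply in_I3 I3_basis_in_I3)
  then have "?sandwich \<noteq> (\<lambda>_. 0)"
    using map_zero by auto
  then show ?thesis
    using g(1) k(1) by (rule I3_diag_sandwich_nonzero_imp_le[rotated 2])
qed

lemma exists_order_reflecting_injection:
  assumes "indecomposable TYPE('r)"
  obtains h :: "'a \<Rightarrow> 'b" where "inj h" "\<And>x y. h x \<le> h y \<Longrightarrow> x \<le> y"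
proof -
  have "\<exists>q. \<Phi> (I3_basis x x x) (q, q, q) = 1" for x
    using diag_image_diag_one[OF assms] by blast
  then obtain h :: "'a \<Rightarrow> 'b" where h: "\<And>x. \<Phi> (I3_basis x x x) (h x, h x, h x) = 1"
    by metis
  show thesis
  proof
    show "inj h"
      by (rule injI) (metis h diag_image_diag_one_unique)
    show "x \<le> y" if "h x \<le> h y" for x y
      using h h that by (rule diag_image_diag_one_reflects_le)
  qed
qed

end

lemma order_pairs_subset_image:
  fixes h :: "'a::order \<Rightarrow> 'b::order"
  assumes "surj h" "\<And>x y. h x \<le> h y \<Longrightarrow> x \<le> y"
  shows "{(u, v). u \<le> v} \<subseteq> map_prod h h ` {(x, y). x \<le> y}"
proof clarify
  fix u v :: 'b
  assume "u \<le> v"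
  then have "inv h u \<le> inv h v"
    using assms by (simp add: surj_f_inv_f)
  moreover have "(u, v) = map_prod h h (inv h u, inv h v)"
    using assms(1) by (simp add: surj_f_inv_f)
  ultimately show "(u, v) \<in> map_prod h h ` {(x, y). x \<le> y}"
    by blast
qed

lemma poset_iso_if_reflecting_injections:
  fixes h :: "'a::{order,finite} \<Rightarrow> 'b::{order,finite}" and h' :: "'b \<Rightarrow> 'a"
  assumes h: "inj h" "\<And>x y. h x \<le> h y \<Longrightarrow> x \<le> y"
    and h': "inj h'" "\<And>u v. h' u \<le> h' v \<Longrightarrow> u \<le> v"
  shows "poset_iso h"
proof -
  let ?le_a = "{(x :: 'a, y). x \<le> y}" and ?le_b = "{(u :: 'b, v). u \<le> v}"
  have card_UNIV: "card (UNIV :: 'a set) = card (UNIV :: 'b set)"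
    using card_inj_on_le[OF h(1)] card_inj_on_le[OF h'(1)] by (simp add: le_antisym)
  have "surj h" "surj h'"
    by (rule card_seteq; simp add: card_image h(1) h'(1) card_UNIV)+
  have "map_prod h h ` ?le_a = ?le_b"
  proof (rule card_seteq[symmetric])
    show "?le_b \<subseteq> map_prod h h ` ?le_a"
      using \<open>surj h\<close> h(2) by (rule order_pairs_subset_image)
    have "card (map_prod h h ` ?le_a) \<le> card ?le_a"
      by (rule card_image_le) simp
    also have "\<dots> \<le> card ?le_b"
      using surj_card_le[OF _ order_pairs_subset_image[OF \<open>surj h'\<close> h'(2)]] by simp
    finally show "card (map_prod h h ` ?le_a) \<le> card ?le_b" .
  qed simp
  then have "x \<le> y \<longleftrightarrow> h x \<le> h y" for x y
    using h(2) by blast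
  then show ?thesis
    using \<open>surj h\<close> h(1) by (simp add: poset_iso_def bij_def)
qed

theorem theorem3p5:
  fixes \<Phi> :: "('a::{order,finite} \<times> 'a \<times> 'a \<Rightarrow> 'r::comm_ring_1) \<Rightarrow> ('b::{order,finite} \<times> 'b \<times> 'b \<Rightarrow> 'r)"
  assumes "indecomposable TYPE('r)"
    and "I3_algebra_iso \<Phi>"
  shows "\<exists>h :: 'a \<Rightarrow> 'b. poset_iso h"
proof -
  interpret I3_mult_iso \<Phi>
    using assms(2) by unfold_locales (auto simp: I3_algebra_iso_def)
  obtain h :: "'a \<Rightarrow> 'b" where "inj h" "\<And>x y. h x \<le> h y \<Longrightarrow> x \<le> y"
    using exists_order_reflecting_injection[OF assms(1)] by blast
  moreover obtain h' :: "'b \<Rightarrow> 'a" where "inj h'" "\<And>u v. h' u \<le> h' v \<Longrightarrow> u \<le> v"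
    using I3_mult_iso.exists_order_reflecting_injection[OF inv_into_mult_iso assms(1)] by blast
  ultimately show ?thesis
    using poset_iso_if_reflecting_injections by blast
qed

end
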